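(* Let $(X,d)$ be a compact metric space, $T:X\to X$ continuous, $Z\subset X$ non-empty, and $\Phi=\{\varphi_n:X\to\mathbb{R}\}_{n\in\mathbb{N}}$ a sequence of continuous functions satisfying the tempered distortion condition $\lim_{\varepsilon\to 0}\limsup_{n\to\infty}\varphi_n(\varepsilon)/n=0$, where $\varphi_n(\varepsilon)=\sup\{|\varphi_n(x)-\varphi_n(y)|: x\in X,\ y\in B_n(x,e^{-n\varepsilon})\}$. Then $$P^{\tilde B}_Z(T,\Phi)=\lim_{\varepsilon\to0}\tilde M_\varepsilon(Z,\Phi).$$
   Context: The neutralized Bowen ball is $B_n(x,e^{-n\varepsilon})=\{y\in X: d(T^jx,T^jy)<e^{-n\varepsilon}\ \forall\,0\le j\le n-1\}$. For $\varepsilon>0$, $N\in\mathbb{N}$, $s\in\mathbb{R}$, let $M^s_{N,\varepsilon}(Z,\Phi)=\inf\sum_{i\in I}\exp[-n_is+\sup_{y\in B_{n_i}(x_i,e^{-n_i\varepsilon})}\varphi_{n_i}(y)]$, the infimum over all finite or countable covers $\{B_{n_i}(x_i,e^{-n_i\varepsilon})\}_{i\in I}$ of $Z$ with $n_i\ge N$, $x_i\in X$; $M^s_\varepsilon=\lim_{N\to\infty}M^s_{N,\varepsilon}$; $M_\varepsilon(Z,\Phi)=\inf\{s:M^s_\varepsilon(Z,\Phi)=0\}=\sup\{s:M^s_\varepsilon(Z,\Phi)=\infty\}$; $P^{\tilde B}_Z(T,\Phi)=\lim_{\varepsilon\to0}M_\varepsilon(Z,\Phi)$. The quantities $\tilde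 M^s_{N,\varepsilon}(Z,\Phi)$, $\tilde M^s_\varepsilon(Z,\Phi)$, $\tilde M_\varepsilon(Z,\Phi)$ are defined in exactly the same way except that, in the sum, $\sup_{y\in B_{n_i}(x_i,e^{-n_i\varepsilon})}\varphi_{n_i}(y)$ is replaced by $\varphi_{n_i}(z_i)$ for a point $z_i\in B_{n_i}(x_i,e^{-n_i\varepsilon})$ chosen in each ball of the cover. *)

theory Defs
  imports "HOL-Analysis.Analysis"
begin

definition bowen_ball :: "'a::metric_space set \<Rightarrow> ('a \<Rightarrow> 'a) \<Rightarrow> nat \<Rightarrow> 'a \<Rightarrow> real \<Rightarrow> 'a set" where
  "bowen_ball X T n x eps =
     {y \<in> X. \<forall>j<n. dist ((T ^^ j) x) ((T ^^ j) y) < exp (- real n * eps)}"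

definition distortion :: "'a::metric_space set \<Rightarrow> ('a \<Rightarrow> 'a) \<Rightarrow> (nat \<Rightarrow> 'a \<Rightarrow> real) \<Rightarrow> nat \<Rightarrow> real \<Rightarrow> real" where
  "distortion X T \<phi> n eps =
     Sup {\<bar>\<phi> n x - \<phi> n y\<bar> | x y. x \<in> X \<and> y \<in> bowen_ball X T n x eps}"

definition tempered_distortion :: "'a::metric_space set \<Rightarrow> ('a \<Rightarrow> 'a) \<Rightarrow> (nat \<Rightarrow> 'a \<Rightarrow> real) \<Rightarrow> bool" where
  "tempered_distortion X T \<phi> \<longleftrightarrow>
     ((\<lambda>eps. limsup (\<lambda>n. ereal (distortion X T \<phi> n eps / real n))) \<longlongrightarrow> 0) (at_right 0)"

text \<open>Admissible covers: a finite or countable index set I (w.l.o.g. a subset of nat),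
  lengths n_i \<ge> N and centres x_i \<in> X, with the Bowen balls covering Z.\<close>
definition is_cover :: "'a::metric_space set \<Rightarrow> ('a \<Rightarrow> 'a) \<Rightarrow> 'a set \<Rightarrow> nat \<Rightarrow> real
    \<Rightarrow> nat set \<Rightarrow> (nat \<Rightarrow> nat) \<Rightarrow> (nat \<Rightarrow> 'a) \<Rightarrow> bool" where
  "is_cover X T Z N eps I n x \<longleftrightarrow>
     (\<forall>i\<in>I. N \<le> n i \<and> x i \<in> X) \<and> Z \<subseteq> (\<Union>i\<in>I. bowen_ball X T (n i) (x i) eps)"

definition MsN :: "'a::metric_space set \<Rightarrow> ('a \<Rightarrow> 'a) \<Rightarrow> (nat \<Rightarrow> 'a \<Rightarrow> real) \<Rightarrow> 'a set
    \<Rightarrow> real \<Rightarrow> nat \<Rightarrow> real \<Rightarrow> ennreal" where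
  "MsN X T \<phi> Z s N eps =
     (INF (I, n, x) \<in> {(I, n, x). is_cover X T Z N eps I n x}.
        \<Sum>i. (if i \<in> I then ennreal (exp (- real (n i) * s
               + (SUP y \<in> bowen_ball X T (n i) (x i) eps. \<phi> (n i) y))) else 0))"

definition tMsN :: "'a::metric_space set \<Rightarrow> ('a \<Rightarrow> 'a) \<Rightarrow> (nat \<Rightarrow> 'a \<Rightarrow> real) \<Rightarrow> 'a set
    \<Rightarrow> real \<Rightarrow> nat \<Rightarrow> real \<Rightarrow> ennreal" where
  "tMsN X T \<phi> Z s N eps =
     (INF (I, n, x, z) \<in> {(I, n, x, z). is_cover X T Z N eps I n x
                              \<and> (\<forall>i\<in>I. z i \<in> bowen_ball X T (n i) (x i) eps)}.
        \<Sum>i. (if i \<in> I then ennreal (exp (- real (n i) * s + \<phi> (n i) (z i))) else 0))"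

definition Ms :: "'a::metric_space set \<Rightarrow> ('a \<Rightarrow> 'a) \<Rightarrow> (nat \<Rightarrow> 'a \<Rightarrow> real) \<Rightarrow> 'a set
    \<Rightarrow> real \<Rightarrow> real \<Rightarrow> ennreal" where
  "Ms X T \<phi> Z s eps = lim (\<lambda>N. MsN X T \<phi> Z s N eps)"

definition tMs :: "'a::metric_space set \<Rightarrow> ('a \<Rightarrow> 'a) \<Rightarrow> (nat \<Rightarrow> 'a \<Rightarrow> real) \<Rightarrow> 'a set
    \<Rightarrow> real \<Rightarrow> real \<Rightarrow> ennreal" where
  "tMs X T \<phi> Z s eps = lim (\<lambda>N. tMsN X T \<phi> Z s N eps)"

definition Meps :: "'a::metric_space set \<Rightarrow> ('a \<Rightarrow> 'a) \<Rightarrow> (nat \<Rightarrow> 'a \<Rightarrow> real) \<Rightarrow> 'a set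
    \<Rightarrow> real \<Rightarrow> ereal" where
  "Meps X T \<phi> Z eps = Inf {ereal s | s. Ms X T \<phi> Z s eps = 0}"

definition tMeps :: "'a::metric_space set \<Rightarrow> ('a \<Rightarrow> 'a) \<Rightarrow> (nat \<Rightarrow> 'a \<Rightarrow> real) \<Rightarrow> 'a set
    \<Rightarrow> real \<Rightarrow> ereal" where
  "tMeps X T \<phi> Z eps = Inf {ereal s | s. tMs X T \<phi> Z s eps = 0}"

definition pressure_tB :: "'a::metric_space set \<Rightarrow> ('a \<Rightarrow> 'a) \<Rightarrow> (nat \<Rightarrow> 'a \<Rightarrow> real) \<Rightarrow> 'a set \<Rightarrow> ereal" where
  "pressure_tB X T \<phi> Z = Lim (at_right 0) (\<lambda>eps. Meps X T \<phi> Z eps)"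

end

theory Submission
  imports Defs
begin

(* Replacing the supremum of phi_n over a Bowen ball by its value at a point of the ball changes
   each term of the cover sums by at most the factor exp (2 phi_n(eps)), where phi_n(eps) is the
   distortion. Hence tilde M_eps <= M_eps <= tilde M_eps + 2 eta as soon as phi_n(eps) <= eta n for
   large n, which tempered distortion provides for all small eps. Since tilde M_eps is monotone in
   eps it converges as eps -> 0, and M_eps is squeezed to the same limit. *)

lemma bowen_ball_antimono:
  assumes "e1 \<le> e2"
  shows "bowen_ball X T n x e2 \<subseteq> bowen_ball X T n x e1"
proof -
  have "exp (- real n * e2) \<le> exp (- real n * e1)"
    using assms by (simp add: mult_left_mono)
  then show ?thesis unfolding bowen_ball_def by (auto intro: less_le_trans)
qed

lemma center_mem_bowen_ball: "x \<in> X \<Longrightarrow> x \<in> bowen_ball X T n x e"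
  unfolding bowen_ball_def by simp

lemma bowen_ball_subset: "bowen_ball X T n x e \<subseteq> X"
  unfolding bowen_ball_def by auto

lemma bounded_image_compact:
  fixes f :: "'a::metric_space \<Rightarrow> real"
  assumes "compact X" "continuous_on X f"
  shows "bounded (f ` X)"
  using compact_continuous_image[OF assms(2,1)] by (rule compact_imp_bounded)

lemma abs_diff_le_distortion:
  assumes "compact X" "continuous_on X (\<phi> n)" "x \<in> X" "y \<in> bowen_ball X T n x e"
  shows "\<bar>\<phi> n x - \<phi> n y\<bar> \<le> distortion X T \<phi> n e"
proof -
  obtain B where B: "\<And>x. x \<in> X \<Longrightarrow> \<bar>\<phi> n x\<bar> \<le> B"
    using bounded_image_compact[OF assms(1,2)] unfolding bounded_iff by auto
  have "bdd_above {\<bar>\<phi> n x - \<phi> n y\<bar> | x y. x \<in> X \<and> y \<in> bowen_ball X T n x e}"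
  proof (rule bdd_aboveI[of _ "2 * B"], clarify)
    fix a b assume "a \<in> X" "b \<in> bowen_ball X T n a e"
    then have "\<bar>\<phi> n a\<bar> \<le> B" "\<bar>\<phi> n b\<bar> \<le> B" using B bowen_ball_subset by blast+
    then show "\<bar>\<phi> n a - \<phi> n b\<bar> \<le> 2 * B" by arith
  qed
  then show ?thesis unfolding distortion_def
    by (rule cSup_upper[rotated]) (use assms in blast)
qed

lemma value_le_SUP_bowen_ball:
  fixes \<phi> :: "nat \<Rightarrow> 'a::metric_space \<Rightarrow> real"
  assumes "compact X" "continuous_on X (\<phi> n)" "x \<in> X"
  shows "\<phi> n x \<le> (SUP y \<in> bowen_ball X T n x e. \<phi> n y)"
proof (rule cSUP_upper)
  show "x \<in> bowen_ball X T n x e" using assms(3) by (rule center_mem_bowen_ball)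
  show "bdd_above (\<phi> n ` bowen_ball X T n x e)"
    using bounded_image_compact[OF assms(1,2)] bowen_ball_subset
    by (meson bounded_imp_bdd_above bounded_subset image_mono)
qed

lemma SUP_bowen_ball_le_add_distortion:
  assumes "compact X" "continuous_on X (\<phi> n)" "x \<in> X" "z \<in> bowen_ball X T n x e"
  shows "(SUP y \<in> bowen_ball X T n x e. \<phi> n y) \<le> \<phi> n z + 2 * distortion X T \<phi> n e"
proof (rule cSUP_least)
  show "bowen_ball X T n x e \<noteq> {}" using assms(4) by blast
next
  fix y assume "y \<in> bowen_ball X T n x e"
  then have "\<bar>\<phi> n x - \<phi> n y\<bar> \<le> distortion X T \<phi> n e"
    by (rule abs_diff_le_distortion[where \<phi> = \<phi> and n = n, OF assms(1-3)])
  moreover have "\<bar>\<phi> n x - \<phi> n z\<bar> \<le> distortion X T \<phi> n e"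
    by (rule abs_diff_le_distortion[where \<phi> = \<phi> and n = n, OF assms])
  ultimately show "\<phi> n y \<le> \<phi> n z + 2 * distortion X T \<phi> n e" by arith
qed

lemma suminf_if_mono:
  fixes a b :: "nat \<Rightarrow> ennreal"
  assumes "\<And>i. i \<in> I \<Longrightarrow> a i \<le> b i"
  shows "(\<Sum>i. if i \<in> I then a i else 0) \<le> (\<Sum>i. if i \<in> I then b i else 0)"
  by (rule suminf_le[OF _ summableI summableI]) (simp add: assms)

lemma ennreal_exp_mono: "u \<le> v \<Longrightarrow> ennreal (exp u) \<le> ennreal (exp v)"
  by (simp add: ennreal_leI)

lemma is_cover_antimono_N:
  "N \<le> M \<Longrightarrow> is_cover X T Z M e I n x \<Longrightarrow> is_cover X T Z N e I n x"
  unfolding is_cover_def by force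

lemma is_cover_antimono_eps:
  assumes "e1 \<le> e2" "is_cover X T Z N e2 I n x"
  shows "is_cover X T Z N e1 I n x"
  using assms(2) bowen_ball_antimono[OF assms(1)] unfolding is_cover_def
  by (meson UN_mono order_refl order_trans)

lemma MsN_mono_N:
  assumes "N \<le> M"
  shows "MsN X T \<phi> Z s N e \<le> MsN X T \<phi> Z s M e"
  unfolding MsN_def by (rule INF_superset_mono) (use is_cover_antimono_N[OF assms] in auto)

lemma tMsN_mono_N:
  assumes "N \<le> M"
  shows "tMsN X T \<phi> Z s N e \<le> tMsN X T \<phi> Z s M e"
  unfolding tMsN_def by (rule INF_superset_mono) (use is_cover_antimono_N[OF assms] in auto)

lemma LIMSEQ_lim_incseq:
  fixes f :: "nat \<Rightarrow> 'b::{complete_linorder, linorder_topology}"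
  shows "incseq f \<Longrightarrow> f \<longlonglongrightarrow> lim f"
  by (metis LIMSEQ_SUP limI)

lemma LIMSEQ_MsN_Ms: "(\<lambda>N. MsN X T \<phi> Z s N e) \<longlonglongrightarrow> Ms X T \<phi> Z s e"
  unfolding Ms_def by (rule LIMSEQ_lim_incseq) (simp add: incseq_def MsN_mono_N)

lemma LIMSEQ_tMsN_tMs: "(\<lambda>N. tMsN X T \<phi> Z s N e) \<longlonglongrightarrow> tMs X T \<phi> Z s e"
  unfolding tMs_def by (rule LIMSEQ_lim_incseq) (simp add: incseq_def tMsN_mono_N)

lemma tMsN_mono_eps:
  assumes "e1 \<le> e2"
  shows "tMsN X T \<phi> Z s N e1 \<le> tMsN X T \<phi> Z s N e2"
proof -
  have "is_cover X T Z N e1 I n x \<and> (\<forall>i\<in>I. z i \<in> bowen_ball X T (n i) (x i) e1)"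
    if "is_cover X T Z N e2 I n x" "\<forall>i\<in>I. z i \<in> bowen_ball X T (n i) (x i) e2" for I n x z
    using that is_cover_antimono_eps[OF assms] bowen_ball_antimono[OF assms] by blast
  then show ?thesis unfolding tMsN_def by (intro INF_superset_mono) auto
qed

definition cover_sum_sup :: "'a::metric_space set \<Rightarrow> ('a \<Rightarrow> 'a) \<Rightarrow> (nat \<Rightarrow> 'a \<Rightarrow> real)
    \<Rightarrow> real \<Rightarrow> real \<Rightarrow> nat set \<Rightarrow> (nat \<Rightarrow> nat) \<Rightarrow> (nat \<Rightarrow> 'a) \<Rightarrow> ennreal" where
  "cover_sum_sup X T \<phi> s e I n x =
     (\<Sum>i. if i \<in> I then ennreal (exp (- real (n i) * s
            + (SUP y \<in> bowen_ball X T (n i) (x i) e. \<phi> (n i) y))) else 0)"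

definition cover_sum_at :: "(nat \<Rightarrow> 'a \<Rightarrow> real) \<Rightarrow> real \<Rightarrow> nat set \<Rightarrow> (nat \<Rightarrow> nat) \<Rightarrow> (nat \<Rightarrow> 'a)
    \<Rightarrow> ennreal" where
  "cover_sum_at \<phi> s I n z = (\<Sum>i. if i \<in> I then ennreal (exp (- real (n i) * s + \<phi> (n i) (z i))) else 0)"

lemma MsN_le_cover_sum_sup:
  "is_cover X T Z N e I n x \<Longrightarrow> MsN X T \<phi> Z s N e \<le> cover_sum_sup X T \<phi> s e I n x"
  unfolding MsN_def cover_sum_sup_def by (rule INF_lower2[of "(I, n, x)"]) auto

lemma tMsN_le_cover_sum_at:
  "is_cover X T Z N e I n x \<Longrightarrow> (\<And>i. i \<in> I \<Longrightarrow> z i \<in> bowen_ball X T (n i) (x i) e)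
    \<Longrightarrow> tMsN X T \<phi> Z s N e \<le> cover_sum_at \<phi> s I n z"
  unfolding tMsN_def cover_sum_at_def by (rule INF_lower2[of "(I, n, x, z)"]) auto

lemma MsN_greatest:
  "(\<And>I n x. is_cover X T Z N e I n x \<Longrightarrow> c \<le> cover_sum_sup X T \<phi> s e I n x)
    \<Longrightarrow> c \<le> MsN X T \<phi> Z s N e"
  unfolding MsN_def cover_sum_sup_def by (rule INF_greatest) auto

lemma tMsN_greatest:
  "(\<And>I n x z. is_cover X T Z N e I n x \<Longrightarrow> (\<forall>i\<in>I. z i \<in> bowen_ball X T (n i) (x i) e)
      \<Longrightarrow> c \<le> cover_sum_at \<phi> s I n z)
    \<Longrightarrow> c \<le> tMsN X T \<phi> Z s N e"
  unfolding tMsN_def cover_sum_at_def by (rule INF_greatest) auto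

lemma tMsN_le_MsN:
  assumes "compact X" "\<And>n. continuous_on X (\<phi> n)"
  shows "tMsN X T \<phi> Z s N e \<le> MsN X T \<phi> Z s N e"
proof (rule MsN_greatest)
  fix I n x assume cov: "is_cover X T Z N e I n x"
  then have xX: "\<And>i. i \<in> I \<Longrightarrow> x i \<in> X" by (simp add: is_cover_def)
  have "tMsN X T \<phi> Z s N e \<le> cover_sum_at \<phi> s I n x"
    by (rule tMsN_le_cover_sum_at[OF cov center_mem_bowen_ball[OF xX]])
  also have "\<dots> \<le> cover_sum_sup X T \<phi> s e I n x"
    unfolding cover_sum_at_def cover_sum_sup_def
    by (intro suminf_if_mono ennreal_exp_mono add_left_mono value_le_SUP_bowen_ball assms xX)
  finally show "tMsN X T \<phi> Z s N e \<le> cover_sum_sup X T \<phi> s e I n x" .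
qed

lemma MsN_shift_le_tMsN:
  assumes "compact X" "\<And>n. continuous_on X (\<phi> n)"
    and distortion_le: "\<And>m. N \<le> m \<Longrightarrow> distortion X T \<phi> m e \<le> \<eta> * real m"
  shows "MsN X T \<phi> Z (s + 2 * \<eta>) N e \<le> tMsN X T \<phi> Z s N e"
proof (rule tMsN_greatest)
  fix I n x z assume cov: "is_cover X T Z N e I n x"
    and z: "\<forall>i\<in>I. z i \<in> bowen_ball X T (n i) (x i) e"
  have "MsN X T \<phi> Z (s + 2 * \<eta>) N e \<le> cover_sum_sup X T \<phi> (s + 2 * \<eta>) e I n x"
    by (rule MsN_le_cover_sum_sup[OF cov])
  also have "\<dots> \<le> cover_sum_at \<phi> s I n z"
    unfolding cover_sum_at_def cover_sum_sup_def
  proof (intro suminf_if_mono ennreal_exp_mono)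
    fix i assume "i \<in> I"
    with cov z have "x i \<in> X" "z i \<in> bowen_ball X T (n i) (x i) e" "N \<le> n i"
      by (auto simp: is_cover_def)
    then have "(SUP y \<in> bowen_ball X T (n i) (x i) e. \<phi> (n i) y)
        \<le> \<phi> (n i) (z i) + 2 * distortion X T \<phi> (n i) e"
      by (intro SUP_bowen_ball_le_add_distortion assms(1) assms(2)[of "n i"])
    moreover have "distortion X T \<phi> (n i) e \<le> \<eta> * real (n i)"
      using distortion_le \<open>N \<le> n i\<close> .
    ultimately show "- real (n i) * (s + 2 * \<eta>) + (SUP y \<in> bowen_ball X T (n i) (x i) e. \<phi> (n i) y)
        \<le> - real (n i) * s + \<phi> (n i) (z i)"
      by (simp add: algebra_simps)
  qed
  finally show "MsN X T \<phi> Z (s + 2 * \<eta>) N e \<le> cover_sum_at \<phi> s I n z" .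
qed

lemma Inf_zeros_le_shift:
  fixes f g :: "real \<Rightarrow> ennreal"
  assumes "\<And>s. g (s + \<delta>) \<le> f s"
  shows "Inf {ereal s | s. g s = 0} \<le> Inf {ereal s | s. f s = 0} + ereal \<delta>"
proof -
  have "Inf {ereal s | s. g s = 0} - ereal \<delta> \<le> ereal s" if "f s = 0" for s
  proof -
    have "g (s + \<delta>) = 0" using assms[of s] that by simp
    then have "Inf {ereal s | s. g s = 0} \<le> ereal (s + \<delta>)" by (auto intro: Inf_lower)
    then show ?thesis by (simp add: ereal_minus_le)
  qed
  then have "Inf {ereal s | s. g s = 0} - ereal \<delta> \<le> Inf {ereal s | s. f s = 0}"
    by (auto intro: Inf_greatest)
  then show ?thesis by (simp add: ereal_minus_le)
qed

lemma tMeps_mono: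
  assumes "e1 \<le> e2"
  shows "tMeps X T \<phi> Z e1 \<le> tMeps X T \<phi> Z e2"
proof -
  have "tMs X T \<phi> Z s e1 \<le> tMs X T \<phi> Z s e2" for s
    by (rule LIMSEQ_le[OF LIMSEQ_tMsN_tMs LIMSEQ_tMsN_tMs]) (use tMsN_mono_eps[OF assms] in blast)
  then show ?thesis
    using Inf_zeros_le_shift[of "\<lambda>s. tMs X T \<phi> Z s e1" 0 "\<lambda>s. tMs X T \<phi> Z s e2"]
    by (simp add: tMeps_def)
qed

lemma tMeps_le_Meps:
  assumes "compact X" "\<And>n. continuous_on X (\<phi> n)"
  shows "tMeps X T \<phi> Z e \<le> Meps X T \<phi> Z e"
proof -
  have "tMs X T \<phi> Z s e \<le> Ms X T \<phi> Z s e" for s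
    by (rule LIMSEQ_le[OF LIMSEQ_tMsN_tMs LIMSEQ_MsN_Ms]) (use tMsN_le_MsN[OF assms] in auto)
  then show ?thesis
    using Inf_zeros_le_shift[of "\<lambda>s. tMs X T \<phi> Z s e" 0 "\<lambda>s. Ms X T \<phi> Z s e"]
    by (simp add: tMeps_def Meps_def)
qed

lemma Meps_le_tMeps_add:
  assumes "compact X" "\<And>n. continuous_on X (\<phi> n)"
    and "\<And>m. N \<le> m \<Longrightarrow> distortion X T \<phi> m e \<le> \<eta> * real m"
  shows "Meps X T \<phi> Z e \<le> tMeps X T \<phi> Z e + ereal (2 * \<eta>)"
proof -
  have "Ms X T \<phi> Z (s + 2 * \<eta>) e \<le> tMs X T \<phi> Z s e" for s
    by (rule LIMSEQ_le[OF LIMSEQ_MsN_Ms LIMSEQ_tMsN_tMs])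
      (use MsN_shift_le_tMsN[OF assms(1,2)] assms(3) in \<open>meson order_trans\<close>)
  then show ?thesis
    using Inf_zeros_le_shift[of "\<lambda>s. Ms X T \<phi> Z s e" "2 * \<eta>" "\<lambda>s. tMs X T \<phi> Z s e"]
    by (simp add: tMeps_def Meps_def)
qed

lemma tempered_distortion_eventually_le:
  assumes "tempered_distortion X T \<phi>" "0 < \<eta>"
  shows "\<forall>\<^sub>F e in at_right 0. \<exists>N. \<forall>m\<ge>N. distortion X T \<phi> m e \<le> \<eta> * real m"
proof -
  have "\<forall>\<^sub>F e in at_right 0. limsup (\<lambda>m. ereal (distortion X T \<phi> m e / real m)) < ereal \<eta>"
    using assms unfolding tempered_distortion_def by (simp add: order_tendstoD(2))
  then show ?thesis
  proof (rule eventually_mono)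
    fix e assume "limsup (\<lambda>m. ereal (distortion X T \<phi> m e / real m)) < ereal \<eta>"
    then have "\<forall>\<^sub>F m in sequentially. ereal (distortion X T \<phi> m e / real m) < ereal \<eta>"
      by (rule Limsup_lessD)
    then obtain N where N: "\<And>m. N \<le> m \<Longrightarrow> distortion X T \<phi> m e / real m < \<eta>"
      by (auto simp: eventually_sequentially)
    have "distortion X T \<phi> m e \<le> \<eta> * real m" if "max N 1 \<le> m" for m
      using N[of m] that by (auto simp: pos_divide_less_eq)
    then show "\<exists>N. \<forall>m\<ge>N. distortion X T \<phi> m e \<le> \<eta> * real m" by blast
  qed
qed

lemma tendsto_ereal_squeeze_add:
  fixes f g :: "'a \<Rightarrow> ereal"
  assumes f: "(f \<longlongrightarrow> L) F"
    and lower: "\<forall>\<^sub>F x in F. f x \<le> g x"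
    and upper: "\<And>\<eta>. 0 < \<eta> \<Longrightarrow> \<forall>\<^sub>F x in F. g x \<le> f x + ereal \<eta>"
  shows "(g \<longlongrightarrow> L) F"
proof (rule order_tendstoI)
  fix a assume "a < L"
  from order_tendstoD(1)[OF f this] lower show "\<forall>\<^sub>F x in F. a < g x"
    by eventually_elim (rule less_le_trans)
next
  fix a assume "L < a"
  then obtain c1 where c1: "L < ereal c1" "ereal c1 < a" by (meson ereal_dense2)
  then obtain c2 where c2: "c1 < c2" "ereal c2 < a" by (meson ereal_dense2 less_ereal.simps(1))
  have "\<forall>\<^sub>F x in F. f x < ereal c1" by (rule order_tendstoD(2)[OF f c1(1)])
  moreover have "\<forall>\<^sub>F x in F. g x \<le> f x + ereal (c2 - c1)"
    using c2(1) by (intro upper) simp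
  ultimately show "\<forall>\<^sub>F x in F. g x < a"
  proof eventually_elim
    case (elim x)
    then have "g x < ereal c2" by (cases "f x") (auto intro: le_less_trans)
    then show ?case using c2(2) by (rule less_trans)
  qed
qed

theorem mainTheorem2:
  fixes X Z :: "'a::metric_space set" and T :: "'a \<Rightarrow> 'a" and \<phi> :: "nat \<Rightarrow> 'a \<Rightarrow> real"
  assumes "compact X"
    and "continuous_on X T" and "T ` X \<subseteq> X"
    and "Z \<subseteq> X" and "Z \<noteq> {}"
    and "\<And>n. continuous_on X (\<phi> n)"
    and "tempered_distortion X T \<phi>"
  shows "((\<lambda>eps. tMeps X T \<phi> Z eps) \<longlongrightarrow> pressure_tB X T \<phi> Z) (at_right 0)"
proof -
  define L where "L = Inf (tMeps X T \<phi> Z ` {0<..})"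
  have tMeps_lim: "(tMeps X T \<phi> Z \<longlongrightarrow> L) (at_right 0)"
    using Lim_right_bound[of UNIV 0 "tMeps X T \<phi> Z" bot] by (simp add: L_def tMeps_mono)
  have "(Meps X T \<phi> Z \<longlongrightarrow> L) (at_right 0)"
  proof (rule tendsto_ereal_squeeze_add[OF tMeps_lim])
    show "\<forall>\<^sub>F e in at_right 0. tMeps X T \<phi> Z e \<le> Meps X T \<phi> Z e"
      by (simp add: tMeps_le_Meps assms(1,6))
    fix \<eta> :: real assume "0 < \<eta>"
    then have "\<forall>\<^sub>F e in at_right 0. \<exists>N. \<forall>m\<ge>N. distortion X T \<phi> m e \<le> \<eta> / 2 * real m"
      by (intro tempered_distortion_eventually_le assms(7)) simp
    then show "\<forall>\<^sub>F e in at_right 0. Meps X T \<phi> Z e \<le> tMeps X T \<phi> Z e + ereal \<eta>"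
      by eventually_elim (use Meps_le_tMeps_add[OF assms(1,6)] in fastforce)
  qed
  then have "pressure_tB X T \<phi> Z = L"
    unfolding pressure_tB_def by (rule tendsto_Lim[OF trivial_limit_at_right_real])
  with tMeps_lim show ?thesis by simp
qed

end
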